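(* Let $\mathcal{X},\mathcal{Y}$ be disjoint finite sets of Boolean variables, $alive\notin\mathcal{X}\cup\mathcal{Y}$ a fresh variable, $\psi_A$ an LTL formula over $\mathcal{X}\cup\mathcal{Y}$, $\phi$ an LTLf formula over $\mathcal{X}\cup\mathcal{Y}$, and $\psi=t(\phi)\wedge alive\wedge(alive\ U\ (G\neg alive))$. Then $\phi$ is realizable with respect to $\langle\mathcal{X},\mathcal{Y}\rangle$ under assumption $\psi_A$ if and only if the LTL formula $\psi_A\rightarrow\psi$ is realizable with respect to $\langle\mathcal{X},\mathcal{Y}\cup\{alive\}\rangle$.
   Context: LTLf formulas: $\phi ::= a \mid \neg\phi \mid \phi_1\wedge\phi_2 \mid X\phi \mid \phi_1 U\phi_2$ with the finite-trace semantics: $\rho,i\models X\phi$ iff $i+1<|\rho|$ and $\rho,i+1\models\phi$; $\rho,i\models\phi_1U\phi_2$ iff there is $j$ with $i\le j<|\rho|$, $\rho,j\models\phi_2$ and $\rho,k\models\phi_1$ for $i\le k<j$; atoms and Boolean connectives as usual; $\rho\models\phi$ iff $\rho,0\models\phi$. LTL: same syntax plus $F,G$, standard semantics over infinite traces. Translation $t$: $t(a)=a$; $t(\neg\phi_1)=\neg t(\phi_1)$; $t(\phi_1\wedge\phi_2)=t(\phi_1)\wedge t(\phi_2)$; $t(X\phi)=X(alive\wedge t(\phi))$; $t(\phi_1U\phi_2)=t(\phi_1)\,U\,(alive\wedge t(\phi_2))$. Realizability under assumption: $\phi$ is realizable with respect to $\langle\mathcal{X},\mathcal{Y}\rangle$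 under assumption $\psi_A$ if there is $g:(2^{\mathcal{X}})^+\to 2^{\mathcal{Y}}$ such that for every $\lambda=X_0,X_1,\ldots\in(2^{\mathcal{X}})^\omega$, if the infinite trace $\rho=(X_0\cup g(X_0)),(X_1\cup g(X_0,X_1)),\ldots$ satisfies $\psi_A$, then there is $k\ge0$ with $\phi$ true in the finite prefix $(X_0\cup g(X_0)),\ldots,(X_k\cup g(X_0,\ldots,X_k))$. LTL realizability: an LTL formula $\Psi$ over $\mathcal{X}\cup\mathcal{Y}'$ ($\mathcal{X},\mathcal{Y}'$ disjoint) is realizable with respect to $\langle\mathcal{X},\mathcal{Y}'\rangle$ if there is $f:(2^{\mathcal{X}})^+\to 2^{\mathcal{Y}'}$ such that for every $\lambda=X_0,X_1,\ldots\in(2^{\mathcal{X}})^\omega$, $\Psi$ holds on the infinite trace $(X_0\cup f(X_0)),(X_1\cup f(X_0,X_1)),(X_2\cup f(X_0,X_1,X_2)),\ldots$. *)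

theory Defs
  imports Main
begin

datatype 'a ltlf =
    FAtom 'a
  | FNot "'a ltlf"
  | FAnd "'a ltlf" "'a ltlf"
  | FNext "'a ltlf"
  | FUntil "'a ltlf" "'a ltlf"

(* a finite trace is a list of states; a state is the set of true variables *)
fun ltlf_sat :: "'a set list \<Rightarrow> nat \<Rightarrow> 'a ltlf \<Rightarrow> bool" where
  "ltlf_sat \<rho> i (FAtom a) = (a \<in> \<rho> ! i)"
| "ltlf_sat \<rho> i (FNot \<phi>) = (\<not> ltlf_sat \<rho> i \<phi>)"
| "ltlf_sat \<rho> i (FAnd \<phi>1 \<phi>2) = (ltlf_sat \<rho> i \<phi>1 \<and> ltlf_sat \<rho> i \<phi>2)"
| "ltlf_sat \<rho> i (FNext \<phi>) = (i + 1 < length \<rho> \<and> ltlf_sat \<rho> (i + 1) \<phi>)"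
| "ltlf_sat \<rho> i (FUntil \<phi>1 \<phi>2) =
     (\<exists>j. i \<le> j \<and> j < length \<rho> \<and> ltlf_sat \<rho> j \<phi>2 \<and>
          (\<forall>k. i \<le> k \<and> k < j \<longrightarrow> ltlf_sat \<rho> k \<phi>1))"

definition ltlf_models :: "'a set list \<Rightarrow> 'a ltlf \<Rightarrow> bool" where
  "ltlf_models \<rho> \<phi> = ltlf_sat \<rho> 0 \<phi>"

fun ltlf_atoms :: "'a ltlf \<Rightarrow> 'a set" where
  "ltlf_atoms (FAtom a) = {a}"
| "ltlf_atoms (FNot \<phi>) = ltlf_atoms \<phi>"
| "ltlf_atoms (FAnd \<phi>1 \<phi>2) = ltlf_atoms \<phi>1 \<union> ltlf_atoms \<phi>2"
| "ltlf_atoms (FNext \<phi>) = ltlf_atoms \<phi>"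
| "ltlf_atoms (FUntil \<phi>1 \<phi>2) = ltlf_atoms \<phi>1 \<union> ltlf_atoms \<phi>2"

datatype 'a ltl =
    Atom 'a
  | Not "'a ltl"
  | And "'a ltl" "'a ltl"
  | Next "'a ltl"
  | Until "'a ltl" "'a ltl"
  | Eventually "'a ltl"
  | Globally "'a ltl"

fun ltl_sat :: "(nat \<Rightarrow> 'a set) \<Rightarrow> nat \<Rightarrow> 'a ltl \<Rightarrow> bool" where
  "ltl_sat \<rho> i (Atom a) = (a \<in> \<rho> i)"
| "ltl_sat \<rho> i (Not \<phi>) = (\<not> ltl_sat \<rho> i \<phi>)"
| "ltl_sat \<rho> i (And \<phi>1 \<phi>2) = (ltl_sat \<rho> i \<phi>1 \<and> ltl_sat \<rho> i \<phi>2)"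
| "ltl_sat \<rho> i (Next \<phi>) = ltl_sat \<rho> (i + 1) \<phi>"
| "ltl_sat \<rho> i (Until \<phi>1 \<phi>2) =
     (\<exists>j\<ge>i. ltl_sat \<rho> j \<phi>2 \<and> (\<forall>k. i \<le> k \<and> k < j \<longrightarrow> ltl_sat \<rho> k \<phi>1))"
| "ltl_sat \<rho> i (Eventually \<phi>) = (\<exists>j\<ge>i. ltl_sat \<rho> j \<phi>)"
| "ltl_sat \<rho> i (Globally \<phi>) = (\<forall>j\<ge>i. ltl_sat \<rho> j \<phi>)"

definition ltl_models :: "(nat \<Rightarrow> 'a set) \<Rightarrow> 'a ltl \<Rightarrow> bool" where
  "ltl_models \<rho> \<phi> = ltl_sat \<rho> 0 \<phi>"

fun ltl_atoms :: "'a ltl \<Rightarrow> 'a set" where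
  "ltl_atoms (Atom a) = {a}"
| "ltl_atoms (Not \<phi>) = ltl_atoms \<phi>"
| "ltl_atoms (And \<phi>1 \<phi>2) = ltl_atoms \<phi>1 \<union> ltl_atoms \<phi>2"
| "ltl_atoms (Next \<phi>) = ltl_atoms \<phi>"
| "ltl_atoms (Until \<phi>1 \<phi>2) = ltl_atoms \<phi>1 \<union> ltl_atoms \<phi>2"
| "ltl_atoms (Eventually \<phi>) = ltl_atoms \<phi>"
| "ltl_atoms (Globally \<phi>) = ltl_atoms \<phi>"

definition Implies :: "'a ltl \<Rightarrow> 'a ltl \<Rightarrow> 'a ltl" where
  "Implies \<phi>1 \<phi>2 = Not (And \<phi>1 (Not \<phi>2))"

fun transl :: "'a \<Rightarrow> 'a ltlf \<Rightarrow> 'a ltl" where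
  "transl alive (FAtom a) = Atom a"
| "transl alive (FNot \<phi>) = Not (transl alive \<phi>)"
| "transl alive (FAnd \<phi>1 \<phi>2) = And (transl alive \<phi>1) (transl alive \<phi>2)"
| "transl alive (FNext \<phi>) = Next (And (Atom alive) (transl alive \<phi>))"
| "transl alive (FUntil \<phi>1 \<phi>2) =
     Until (transl alive \<phi>1) (And (Atom alive) (transl alive \<phi>2))"

definition psi_of :: "'a \<Rightarrow> 'a ltlf \<Rightarrow> 'a ltl" where
  "psi_of alive \<phi> =
     And (transl alive \<phi>)
         (And (Atom alive) (Until (Atom alive) (Globally (Not (Atom alive)))))"

(* a strategy g : (2^X)^+ \<rightarrow> 2^Y, represented as a total function on lists,
   constrained on nonempty lists of subsets of X *)
definition is_strategy :: "'a set \<Rightarrow> 'a set \<Rightarrow> ('a set list \<Rightarrow> 'a set) \<Rightarrow> bool" where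
  "is_strategy X Y g \<longleftrightarrow>
     (\<forall>ls. ls \<noteq> [] \<and> set ls \<subseteq> Pow X \<longrightarrow> g ls \<subseteq> Y)"

definition is_input :: "'a set \<Rightarrow> (nat \<Rightarrow> 'a set) \<Rightarrow> bool" where
  "is_input X lam \<longleftrightarrow> (\<forall>i. lam i \<subseteq> X)"

definition play :: "('a set list \<Rightarrow> 'a set) \<Rightarrow> (nat \<Rightarrow> 'a set) \<Rightarrow> nat \<Rightarrow> 'a set" where
  "play g lam i = lam i \<union> g (map lam [0..<Suc i])"

definition play_prefix :: "('a set list \<Rightarrow> 'a set) \<Rightarrow> (nat \<Rightarrow> 'a set) \<Rightarrow> nat \<Rightarrow> 'a set list" where
  "play_prefix g lam k = map (play g lam) [0..<Suc k]"

definition ltlf_realizable_under ::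
  "'a set \<Rightarrow> 'a set \<Rightarrow> 'a ltl \<Rightarrow> 'a ltlf \<Rightarrow> bool" where
  "ltlf_realizable_under X Y \<psi>A \<phi> \<longleftrightarrow>
     (\<exists>g. is_strategy X Y g \<and>
        (\<forall>lam. is_input X lam \<longrightarrow> ltl_models (play g lam) \<psi>A \<longrightarrow>
              (\<exists>k. ltlf_models (play_prefix g lam k) \<phi>)))"

definition ltl_realizable :: "'a set \<Rightarrow> 'a set \<Rightarrow> 'a ltl \<Rightarrow> bool" where
  "ltl_realizable X Y' \<Psi> \<longleftrightarrow>
     (\<exists>f. is_strategy X Y' f \<and>
        (\<forall>lam. is_input X lam \<longrightarrow> ltl_models (play f lam) \<Psi>))"

end

theory Submission
  imports Defs
begin

text \<open>An LTL strategy for the translated game is an LTLf strategy that additionally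
announces, through the fresh variable alive, that the goal has not been reached yet. On an
infinite play on which alive holds exactly at the positions 0..K, t(\<phi>) holds iff \<phi> holds on
the prefix of length K + 1, and alive U (G \<not>alive) forces such a K to exist. Conversely,
forgetting alive turns an LTL strategy into an LTLf strategy; since neither \<psi>A nor \<phi>
mentions alive, the two plays satisfy the same relevant formulas.\<close>

lemma ltl_sat_Diff_atom:
  assumes "a \<notin> ltl_atoms \<psi>"
  shows "ltl_sat (\<lambda>i. \<rho> i - {a}) i \<psi> \<longleftrightarrow> ltl_sat \<rho> i \<psi>"
  using assms by (induction \<psi> arbitrary: i) auto

lemma ltlf_sat_Diff_atom:
  assumes "a \<notin> ltlf_atoms \<phi>" and "i < length w"
  shows "ltlf_sat (map (\<lambda>s. s - {a}) w) i \<phi> \<longleftrightarrow> ltlf_sat w i \<phi>"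
  using assms by (induction \<phi> arbitrary: i) auto

lemma ltl_sat_transl_iff:
  assumes alive: "\<And>i. alive \<in> \<rho> i \<longleftrightarrow> i \<le> K" and "i \<le> K"
  shows "ltl_sat \<rho> i (transl alive \<phi>) \<longleftrightarrow> ltlf_sat (map \<rho> [0..<Suc K]) i \<phi>"
  using \<open>i \<le> K\<close>
proof (induction \<phi> arbitrary: i)
  case (FAtom a)
  then show ?case by (simp del: upt_Suc)
next
  case (FNext \<phi>)
  then show ?case using alive by (cases "i + 1 \<le> K") auto
next
  case (FUntil \<phi>1 \<phi>2)
  let ?w = "map \<rho> [0..<Suc K]"
  show ?case
  proof
    assume "ltl_sat \<rho> i (transl alive (FUntil \<phi>1 \<phi>2))"
    then obtain j where "i \<le> j" "alive \<in> \<rho> j" and \<phi>2: "ltl_sat \<rho> j (transl alive \<phi>2)"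
      and \<phi>1: "\<forall>k. i \<le> k \<and> k < j \<longrightarrow> ltl_sat \<rho> k (transl alive \<phi>1)"
      by auto
    have "j \<le> K"
      using alive \<open>alive \<in> \<rho> j\<close> by blast
    then have "ltlf_sat ?w j \<phi>2" "\<forall>k. i \<le> k \<and> k < j \<longrightarrow> ltlf_sat ?w k \<phi>1"
      using FUntil.IH \<phi>1 \<phi>2 by auto
    with \<open>i \<le> j\<close> \<open>j \<le> K\<close> show "ltlf_sat ?w i (FUntil \<phi>1 \<phi>2)"
      by (simp only: ltlf_sat.simps length_map length_upt) auto
  next
    assume "ltlf_sat ?w i (FUntil \<phi>1 \<phi>2)"
    then obtain j where "i \<le> j" "j \<le> K" and \<phi>2: "ltlf_sat ?w j \<phi>2"
      and \<phi>1: "\<forall>k. i \<le> k \<and> k < j \<longrightarrow> ltlf_sat ?w k \<phi>1"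
      by (auto simp only: ltlf_sat.simps length_map length_upt)
    then have "alive \<in> \<rho> j" "ltl_sat \<rho> j (transl alive \<phi>2)"
      "\<forall>k. i \<le> k \<and> k < j \<longrightarrow> ltl_sat \<rho> k (transl alive \<phi>1)"
      using FUntil.IH alive by auto
    with \<open>i \<le> j\<close> show "ltl_sat \<rho> i (transl alive (FUntil \<phi>1 \<phi>2))"
      by auto
  qed
qed simp_all

lemma ltl_models_psi_of_iff:
  "ltl_models \<rho> (psi_of alive \<phi>) \<longleftrightarrow>
   (\<exists>K. (\<forall>i. alive \<in> \<rho> i \<longleftrightarrow> i \<le> K) \<and> ltlf_models (map \<rho> [0..<Suc K]) \<phi>)"
proof
  assume "ltl_models \<rho> (psi_of alive \<phi>)"
  then obtain j where transl: "ltl_sat \<rho> 0 (transl alive \<phi>)" and "alive \<in> \<rho> 0"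
    and dead: "\<forall>m\<ge>j. alive \<notin> \<rho> m" and alive: "\<forall>k<j. alive \<in> \<rho> k"
    by (auto simp: ltl_models_def psi_of_def)
  then obtain K where "j = Suc K"
    by (cases j) auto
  have window: "alive \<in> \<rho> i \<longleftrightarrow> i \<le> K" for i
    using dead alive \<open>j = Suc K\<close> by (cases "i < j") auto
  then have "ltlf_models (map \<rho> [0..<Suc K]) \<phi>"
    using transl ltl_sat_transl_iff[of alive \<rho> K 0] by (simp add: ltlf_models_def)
  with window show "\<exists>K. (\<forall>i. alive \<in> \<rho> i \<longleftrightarrow> i \<le> K) \<and> ltlf_models (map \<rho> [0..<Suc K]) \<phi>"
    by blast
next
  assume "\<exists>K. (\<forall>i. alive \<in> \<rho> i \<longleftrightarrow> i \<le> K) \<and> ltlf_models (map \<rho> [0..<Suc K]) \<phi>"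
  then obtain K where window: "\<And>i. alive \<in> \<rho> i \<longleftrightarrow> i \<le> K"
    and sat: "ltlf_models (map \<rho> [0..<Suc K]) \<phi>"
    by blast
  have "ltl_sat \<rho> 0 (transl alive \<phi>)"
    using sat ltl_sat_transl_iff[of alive \<rho> K 0, OF window] by (simp add: ltlf_models_def)
  moreover have "\<forall>m\<ge>Suc K. alive \<notin> \<rho> m" "\<forall>k<Suc K. alive \<in> \<rho> k"
    using window by auto
  then have "ltl_sat \<rho> 0 (Until (Atom alive) (Globally (Not (Atom alive))))"
    by (auto intro!: exI[of _ "Suc K"])
  ultimately show "ltl_models \<rho> (psi_of alive \<phi>)"
    using window[of 0] by (simp add: ltl_models_def psi_of_def)
qed

lemma play_prefix_cong:
  assumes "\<And>i. i \<le> k \<Longrightarrow> lam i = lam' i"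
  shows "play_prefix g lam k = play_prefix g lam' k"
  unfolding play_prefix_def
proof (rule map_cong[OF refl])
  fix i
  assume "i \<in> set [0..<Suc k]"
  then have history: "map lam [0..<Suc i] = map lam' [0..<Suc i]" and "lam i = lam' i"
    using assms by auto
  then show "play g lam i = play g lam' i"
    by (simp only: play_def history)
qed

lemma play_Diff_atom:
  assumes "is_input X lam" and "a \<notin> X"
    and "\<And>ls. ls \<noteq> [] \<Longrightarrow> set ls \<subseteq> Pow X \<Longrightarrow> g ls = f ls - {a}"
  shows "play g lam = (\<lambda>i. play f lam i - {a})"
proof
  fix i
  have "g (map lam [0..<Suc i]) = f (map lam [0..<Suc i]) - {a}"
    using assms(1) by (intro assms(3)) (auto simp: is_input_def simp del: upt_Suc)
  moreover have "a \<notin> lam i"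
    using assms(1,2) by (auto simp: is_input_def)
  ultimately show "play g lam i = play f lam i - {a}"
    by (auto simp: play_def)
qed

lemma ltlf_models_play_prefix_Diff_atom:
  assumes "play g lam = (\<lambda>i. play f lam i - {a})" and "a \<notin> ltlf_atoms \<phi>"
  shows "ltlf_models (play_prefix g lam K) \<phi> \<longleftrightarrow> ltlf_models (map (play f lam) [0..<Suc K]) \<phi>"
proof -
  have "play_prefix g lam K = map (\<lambda>s. s - {a}) (map (play f lam) [0..<Suc K])"
    by (simp add: play_prefix_def assms(1) del: upt_Suc)
  then show ?thesis
    using ltlf_sat_Diff_atom[OF assms(2), of 0 "map (play f lam) [0..<Suc K]"]
    by (simp add: ltlf_models_def del: upt_Suc map_map)
qed

lemma ltl_realizable_imp_ltlf_realizable_under: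
  assumes "alive \<notin> X" and "alive \<notin> ltl_atoms \<psi>A" and "alive \<notin> ltlf_atoms \<phi>"
    and "ltl_realizable X (Y \<union> {alive}) (Implies \<psi>A (psi_of alive \<phi>))"
  shows "ltlf_realizable_under X Y \<psi>A \<phi>"
proof -
  obtain f where "is_strategy X (Y \<union> {alive}) f"
    and f_wins: "\<And>lam. is_input X lam \<Longrightarrow> ltl_models (play f lam) (Implies \<psi>A (psi_of alive \<phi>))"
    using assms(4) unfolding ltl_realizable_def by blast
  define g where "g ls = f ls - {alive}" for ls
  have "is_strategy X Y g"
    using \<open>is_strategy X (Y \<union> {alive}) f\<close> unfolding is_strategy_def g_def by blast
  moreover have "\<exists>k. ltlf_models (play_prefix g lam k) \<phi>"
    if lam: "is_input X lam" and "ltl_models (play g lam) \<psi>A" for lam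
  proof -
    have play_g: "play g lam = (\<lambda>i. play f lam i - {alive})"
      using play_Diff_atom[OF lam assms(1)] by (simp add: g_def)
    then have "ltl_models (play f lam) \<psi>A"
      using \<open>ltl_models (play g lam) \<psi>A\<close> ltl_sat_Diff_atom[OF assms(2)]
      by (simp add: ltl_models_def)
    then have "ltl_models (play f lam) (psi_of alive \<phi>)"
      using f_wins[OF lam] by (simp add: ltl_models_def Implies_def)
    then obtain K where "ltlf_models (map (play f lam) [0..<Suc K]) \<phi>"
      unfolding ltl_models_psi_of_iff by blast
    then show ?thesis
      using ltlf_models_play_prefix_Diff_atom[OF play_g assms(3)] by blast
  qed
  ultimately show ?thesis
    unfolding ltlf_realizable_under_def by blast
qed

lemma all_less_not_iff_le_Least:
  fixes P :: "nat \<Rightarrow> bool"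
  assumes "P k"
  shows "(\<forall>i<n. \<not> P i) \<longleftrightarrow> n \<le> (LEAST i. P i)"
proof
  assume "\<forall>i<n. \<not> P i"
  then show "n \<le> (LEAST i. P i)"
    using LeastI[of P, OF assms] not_le by blast
next
  assume "n \<le> (LEAST i. P i)"
  then show "\<forall>i<n. \<not> P i"
    using not_less_Least order_less_le_trans by blast
qed

text \<open>The LTL strategy plays as g and sets alive as long as no strictly shorter prefix of the
play has satisfied \<phi>; those prefixes are recomputed from the input history ls alone.\<close>

definition add_alive ::
  "('a set list \<Rightarrow> 'a set) \<Rightarrow> 'a ltlf \<Rightarrow> 'a \<Rightarrow> 'a set list \<Rightarrow> 'a set" where
  "add_alive g \<phi> alive ls = g ls \<union>
     (if \<forall>k. Suc k < length ls \<longrightarrow> \<not> ltlf_models (play_prefix g ((!) ls) k) \<phi>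
      then {alive} else {})"

lemma alive_in_play_add_alive_iff:
  assumes "alive \<notin> play g lam n" and "ltlf_models (play_prefix g lam k) \<phi>"
  shows "alive \<in> play (add_alive g \<phi> alive) lam n \<longleftrightarrow>
         n \<le> (LEAST k. ltlf_models (play_prefix g lam k) \<phi>)"
proof -
  have "play_prefix g ((!) (map lam [0..<Suc n])) k = play_prefix g lam k" if "k < n" for k
    using that by (intro play_prefix_cong) (simp del: upt_Suc)
  with assms(1) have "alive \<in> play (add_alive g \<phi> alive) lam n \<longleftrightarrow>
      (\<forall>k<n. \<not> ltlf_models (play_prefix g lam k) \<phi>)"
    by (auto simp: play_def add_alive_def simp del: upt_Suc)
  also have "\<dots> \<longleftrightarrow> n \<le> (LEAST k. ltlf_models (play_prefix g lam k) \<phi>)"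
    using all_less_not_iff_le_Least[of "\<lambda>k. ltlf_models (play_prefix g lam k) \<phi>", OF assms(2)] .
  finally show ?thesis .
qed

lemma ltlf_realizable_under_imp_ltl_realizable:
  assumes "alive \<notin> X \<union> Y" and "alive \<notin> ltl_atoms \<psi>A" and "alive \<notin> ltlf_atoms \<phi>"
    and "ltlf_realizable_under X Y \<psi>A \<phi>"
  shows "ltl_realizable X (Y \<union> {alive}) (Implies \<psi>A (psi_of alive \<phi>))"
proof -
  obtain g where g: "is_strategy X Y g"
    and g_wins: "\<And>lam. is_input X lam \<Longrightarrow> ltl_models (play g lam) \<psi>A \<Longrightarrow>
                        \<exists>k. ltlf_models (play_prefix g lam k) \<phi>"
    using assms(4) unfolding ltlf_realizable_under_def by blast
  define f where "f = add_alive g \<phi> alive"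
  have "is_strategy X (Y \<union> {alive}) f"
    using g unfolding is_strategy_def f_def add_alive_def by auto
  moreover have "ltl_models (play f lam) (Implies \<psi>A (psi_of alive \<phi>))"
    if lam: "is_input X lam" for lam
  proof (cases "ltl_models (play f lam) \<psi>A")
    case True
    have "g ls = f ls - {alive}" if "ls \<noteq> []" "set ls \<subseteq> Pow X" for ls
      using g that assms(1) unfolding is_strategy_def f_def add_alive_def by auto
    then have play_g: "play g lam = (\<lambda>i. play f lam i - {alive})"
      using play_Diff_atom[OF lam] assms(1) by blast
    then have "ltl_models (play g lam) \<psi>A"
      using True ltl_sat_Diff_atom[OF assms(2)] by (simp add: ltl_models_def)
    then obtain k where "ltlf_models (play_prefix g lam k) \<phi>"
      using g_wins[OF lam] by blast
    define K where "K = (LEAST k. ltlf_models (play_prefix g lam k) \<phi>)"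
    have "ltlf_models (play_prefix g lam K) \<phi>"
      unfolding K_def by (rule LeastI) fact
    moreover have "alive \<in> play f lam i \<longleftrightarrow> i \<le> K" for i
      using alive_in_play_add_alive_iff[of alive g lam i k] play_g \<open>ltlf_models (play_prefix g lam k) \<phi>\<close>
      unfolding f_def K_def by simp
    ultimately have "ltl_models (play f lam) (psi_of alive \<phi>)"
      unfolding ltl_models_psi_of_iff ltlf_models_play_prefix_Diff_atom[OF play_g assms(3)]
      by blast
    then show ?thesis
      by (simp add: ltl_models_def Implies_def)
  qed (simp add: ltl_models_def Implies_def)
  ultimately show ?thesis
    unfolding ltl_realizable_def by blast
qed

theorem mainTheorem10:
  fixes X Y :: "'a set" and alive :: 'a and \<psi>A :: "'a ltl" and \<phi> :: "'a ltlf"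
  assumes "finite X" and "finite Y" and "X \<inter> Y = {}"
    and "alive \<notin> X \<union> Y"
    and "ltl_atoms \<psi>A \<subseteq> X \<union> Y"
    and "ltlf_atoms \<phi> \<subseteq> X \<union> Y"
  shows "ltlf_realizable_under X Y \<psi>A \<phi> \<longleftrightarrow>
         ltl_realizable X (Y \<union> {alive}) (Implies \<psi>A (psi_of alive \<phi>))"
proof -
  have "alive \<notin> X" and \<psi>A: "alive \<notin> ltl_atoms \<psi>A" and \<phi>: "alive \<notin> ltlf_atoms \<phi>"
    using assms(4-6) by blast+
  show ?thesis
  proof
    show "ltl_realizable X (Y \<union> {alive}) (Implies \<psi>A (psi_of alive \<phi>))"
      if "ltlf_realizable_under X Y \<psi>A \<phi>"
      using assms(4) \<psi>A \<phi> that by (rule ltlf_realizable_under_imp_ltl_realizable)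
    show "ltlf_realizable_under X Y \<psi>A \<phi>"
      if "ltl_realizable X (Y \<union> {alive}) (Implies \<psi>A (psi_of alive \<phi>))"
      using \<open>alive \<notin> X\<close> \<psi>A \<phi> that by (rule ltl_realizable_imp_ltlf_realizable_under)
  qed
qed

end
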